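(* Let $f\in C^1([0,1],\mathbb{R})$ satisfy $f(0)=f(1)=0$, $f(s)>0$ for all $s\in(0,1)$, $f'(1)<0$, and suppose there exist $s_0\in(0,1)$, $K\ge 0$, $\alpha>0$ and $r>0$ such that $$f(s)\le r\frac{s}{(1+|\ln s|)^\alpha}\ \text{ for all } s\in(0,1),\qquad f(s)\ge r\frac{s}{(1+|\ln s|)^\alpha}(1-Ks)\ \text{ for all } s\in(0,s_0].$$ Let $\mu>0$, $p:=\frac{1}{\alpha+1}$, and for $M>e$ define $z_0:=\big(\frac{\ln M}{\mu}\big)^{1/p}$ and $w(z):=Me^{-\mu z^p}$ for $z\ge z_0$ (so $0<w\le1$). Then for any $M>e$ there is $c>0$ such that $$w''(z)+cw'(z)+f(w(z))\le 0\quad\text{for all } z\ge z_0.$$ *)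

theory Defs
  imports "HOL-Analysis.Analysis"
begin

end

theory Submission
  imports Defs
begin

(*
  With t = z^p we have w = M exp(-mu t) and -w' = A := mu p z^(p-1) w > 0, while
  w'' = A ((1 - p)/z + mu p z^(p-1)); the bracket decreases in z, so it is at most its
  value B at z0. On the other hand ln w = ln M - mu t <= 0, and for t >= t0 = ln M / mu
  the quantity 1 + |ln w| = 1 + mu t - ln M is at least t / t0 because ln M > 1. The
  upper bound on f thus gives f(w) <= r t0^alpha t^(-alpha) w = C A with
  C = r t0^alpha / (mu p), since p - 1 = -alpha p. Hence c = B + C works.
*)

lemma stretched_exp_derivs:
  fixes M \<mu> p z :: real
  assumes z: "z > 0"
  defines "w \<equiv> \<lambda>z. M * exp (- \<mu> * z powr p)"
  shows "deriv w z = - (\<mu> * p * z powr (p - 1) * w z)"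
    and "deriv (deriv w) z = \<mu> * p * z powr (p - 1) * w z * ((1 - p) / z + \<mu> * p * z powr (p - 1))"
proof -
  define w' where "w' = (\<lambda>z. - (\<mu> * p * z powr (p - 1) * w z))"
  have has_w': "(w has_real_derivative w' x) (at x)" if "x > 0" for x
    unfolding w_def w'_def using that by (auto intro!: derivative_eq_intros)
  have has_w'': "(w' has_real_derivative
      \<mu> * p * x powr (p - 1) * w x * ((1 - p) / x + \<mu> * p * x powr (p - 1))) (at x)"
    if "x > 0" for x
  proof -
    have "x powr (p - 2) = x powr (p - 1) / x"
      using powr_diff[of x "p - 1" 1] that by (simp add: algebra_simps)
    then show ?thesis
      unfolding w_def w'_def using that
      by (auto intro!: derivative_eq_intros) (simp add: field_simps)
  qed
  have deriv_w: "deriv w x = w' x" if "x > 0" for x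
    using has_w'[OF that] by (rule DERIV_imp_deriv)
  then show "deriv w z = - (\<mu> * p * z powr (p - 1) * w z)"
    using z by (simp add: w'_def)
  have "(deriv w has_real_derivative
      \<mu> * p * z powr (p - 1) * w z * ((1 - p) / z + \<mu> * p * z powr (p - 1))) (at z)"
    by (rule has_field_derivative_transform_within_open[of w' _ _ "{0<..}"])
       (use has_w'' z deriv_w in auto)
  then show "deriv (deriv w) z = \<mu> * p * z powr (p - 1) * w z * ((1 - p) / z + \<mu> * p * z powr (p - 1))"
    by (rule DERIV_imp_deriv)
qed

lemma log_gap_ge_ratio:
  fixes L \<mu> t :: real
  assumes "L \<ge> 1" "\<mu> > 0" "L / \<mu> \<le> t"
  shows "t / (L / \<mu>) \<le> 1 + \<mu> * t - L"
proof -
  have "L \<le> \<mu> * t" "L > 0" using assms by (auto simp: field_simps)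
  moreover have "(\<mu> * t - L) * (L - 1) \<ge> 0" using calculation assms(1) by simp
  ultimately show ?thesis using assms by (simp add: field_simps)
qed

lemma upper_bound_up_to_one:
  fixes f :: "real \<Rightarrow> real" and r \<alpha> s :: real
  assumes f1: "f 1 = 0" and r: "r > 0"
    and upper: "\<forall>s\<in>{0<..<1}. f s \<le> r * s / (1 + \<bar>ln s\<bar>) powr \<alpha>"
    and s: "s \<in> {0<..1}"
  shows "f s \<le> r * s / (1 + \<bar>ln s\<bar>) powr \<alpha>"
  using upper s f1 r by (cases "s = 1") auto

lemma f_stretched_exp_le:
  fixes f :: "real \<Rightarrow> real" and r \<alpha> \<mu> M t :: real
  assumes f1: "f 1 = 0" and \<alpha>: "\<alpha> > 0" and r: "r > 0"
    and upper: "\<forall>s\<in>{0<..<1}. f s \<le> r * s / (1 + \<bar>ln s\<bar>) powr \<alpha>"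
    and \<mu>: "\<mu> > 0" and M0: "M > 0" and M: "ln M \<ge> 1" and t: "t \<ge> ln M / \<mu>"
  shows "f (M * exp (- \<mu> * t)) \<le> r * (ln M / \<mu>) powr \<alpha> * t powr (- \<alpha>) * (M * exp (- \<mu> * t))"
proof -
  define t0 where "t0 = ln M / \<mu>"
  define s where "s = M * exp (- \<mu> * t)"
  have t0: "t0 > 0" using M \<mu> by (simp add: t0_def)
  then have t_pos: "t > 0" using t by (simp add: t0_def)
  have s0: "s > 0" using M0 by (simp add: s_def)
  have ln_s: "ln s = ln M - \<mu> * t" by (simp add: s_def ln_mult_pos[OF M0 exp_gt_zero])
  have "ln M \<le> \<mu> * t" using t \<mu> by (simp add: field_simps)
  then have s1: "s \<le> 1" and abs_ln_s: "\<bar>ln s\<bar> = \<mu> * t - ln M"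
    using ln_s s0 by (auto simp: ln_le_zero_iff[symmetric])
  have "f s \<le> r * s / (1 + \<bar>ln s\<bar>) powr \<alpha>"
    using upper_bound_up_to_one[OF f1 r upper] s0 s1 by simp
  also have "\<dots> \<le> r * s / (t / t0) powr \<alpha>"
  proof (rule divide_left_mono)
    show "(t / t0) powr \<alpha> \<le> (1 + \<bar>ln s\<bar>) powr \<alpha>"
      using log_gap_ge_ratio[OF M \<mu> t, folded t0_def] t0 t_pos \<alpha> abs_ln_s
      by (intro powr_mono2) auto
  qed (use r s0 t0 t_pos in auto)
  also have "\<dots> = r * t0 powr \<alpha> * t powr (- \<alpha>) * s"
    using t0 t_pos by (simp add: powr_divide powr_minus_divide)
  finally show ?thesis by (simp add: s_def t0_def)
qed

lemma stretched_exp_supersolution: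
  fixes f :: "real \<Rightarrow> real" and \<alpha> r \<mu> M :: real
  assumes f1: "f 1 = 0" and \<alpha>: "\<alpha> > 0" and r: "r > 0"
    and upper: "\<forall>s\<in>{0<..<1}. f s \<le> r * s / (1 + \<bar>ln s\<bar>) powr \<alpha>"
    and \<mu>: "\<mu> > 0" and M: "M > exp 1"
  defines "p \<equiv> 1 / (\<alpha> + 1)"
  defines "w \<equiv> \<lambda>z. M * exp (- \<mu> * z powr p)"
  shows "\<exists>c>0. \<forall>z\<ge>(ln M / \<mu>) powr (1 / p). deriv (deriv w) z + c * deriv w z + f (w z) \<le> 0"
proof -
  define t0 where "t0 = ln M / \<mu>"
  define z0 where "z0 = t0 powr (1 / p)"
  define B where "B = (1 - p) / z0 + \<mu> * p * z0 powr (p - 1)"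
  define C where "C = r * t0 powr \<alpha> / (\<mu> * p)"
  have M_pos: "M > 0" using M exp_gt_zero less_trans by blast
  have ln_M: "ln M > 1"
    using M M_pos by (metis exp_gt_zero ln_exp ln_less_cancel_iff)
  have p: "0 < p" "p < 1" and p_minus_1: "p - 1 = p * - \<alpha>"
    using \<alpha> by (auto simp: p_def field_simps)
  have t0: "t0 > 0" and z0: "z0 > 0" using ln_M \<mu> by (auto simp: t0_def z0_def)
  have B: "B > 0" and C: "C > 0" using p z0 \<mu> r t0 by (auto simp: B_def C_def intro: add_pos_nonneg)
  have "deriv (deriv w) z + (B + C) * deriv w z + f (w z) \<le> 0" if z: "z \<ge> z0" for z
  proof -
    define A where "A = \<mu> * p * z powr (p - 1) * w z"
    have z_pos: "z > 0" using z z0 by simp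
    have w': "deriv w z = - A"
      and w'': "deriv (deriv w) z = A * ((1 - p) / z + \<mu> * p * z powr (p - 1))"
      using stretched_exp_derivs[OF z_pos, of M \<mu> p] by (simp_all add: A_def w_def)
    have A: "A > 0" using \<mu> p z_pos by (simp add: A_def w_def M_pos)
    have t: "z powr p \<ge> t0"
    proof -
      have "z0 powr p \<le> z powr p" using z z0 p by (intro powr_mono2) auto
      then show ?thesis using p t0 by (simp add: z0_def powr_powr)
    qed
    have "(1 - p) / z + \<mu> * p * z powr (p - 1) \<le> B"
      unfolding B_def using p z z0 \<mu>
      by (intro add_mono mult_left_mono divide_left_mono powr_mono2') auto
    then have w''_le: "deriv (deriv w) z \<le> A * B"
      using A by (simp add: w'')
    have "f (w z) \<le> r * t0 powr \<alpha> * (z powr p) powr (- \<alpha>) * w z"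
      using f_stretched_exp_le[OF f1 \<alpha> r upper \<mu> M_pos _ t[unfolded t0_def]] ln_M
      by (simp add: w_def t0_def)
    also have "\<dots> = C * A"
      using \<mu> p by (simp add: C_def A_def powr_powr p_minus_1)
    finally have "f (w z) \<le> C * A" .
    then show ?thesis using w' w''_le by (simp add: algebra_simps)
  qed
  then show ?thesis
    using B C unfolding z0_def t0_def by (metis add_pos_pos)
qed

theorem lemma2p1:
  fixes f f' :: "real \<Rightarrow> real" and s0 K \<alpha> r \<mu> :: real
  assumes f_deriv: "\<forall>x\<in>{0..1}. (f has_real_derivative f' x) (at x within {0..1})"
    and f'_cont: "continuous_on {0..1} f'"
    and f0: "f 0 = 0" and f1: "f 1 = 0"
    and fpos: "\<forall>s\<in>{0<..<1}. f s > 0"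
    and f'1: "f' 1 < 0"
    and s0: "s0 \<in> {0<..<1}" and K: "K \<ge> 0" and \<alpha>: "\<alpha> > 0" and r: "r > 0"
    and upper: "\<forall>s\<in>{0<..<1}. f s \<le> r * s / (1 + \<bar>ln s\<bar>) powr \<alpha>"
    and lower: "\<forall>s\<in>{0<..s0}. f s \<ge> r * s / (1 + \<bar>ln s\<bar>) powr \<alpha> * (1 - K * s)"
    and \<mu>: "\<mu> > 0"
  shows "\<forall>M::real. M > exp 1 \<longrightarrow>
           (let p = 1 / (\<alpha> + 1);
                z0 = (ln M / \<mu>) powr (1 / p);
                w = (\<lambda>z. M * exp (- \<mu> * z powr p))
            in \<exists>c>0. \<forall>z\<ge>z0. deriv (deriv w) z + c * deriv w z + f (w z) \<le> 0)"
  unfolding Let_def using stretched_exp_supersolution[OF f1 \<alpha> r upper \<mu>] by blast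

end
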